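(* Let $n\ge 3$. For any word $w(A,B)\in\mathbb F_2=\langle A,B\rangle$, the kernel $\operatorname{Ker}(\Theta_n^w)$ contains a subgroup isomorphic to the free group of rank $2$.
   Context: For $n\ge 2$, the flat virtual braid group $FVB_n$ is the group with generators $\sigma_1,\dots,\sigma_{n-1},\rho_1,\dots,\rho_{n-1}$ and defining relations: $\sigma_i^2=1$, $\rho_i^2=1$ for $1\le i\le n-1$; $\sigma_i\sigma_{i+1}\sigma_i=\sigma_{i+1}\sigma_i\sigma_{i+1}$, $\rho_i\rho_{i+1}\rho_i=\rho_{i+1}\rho_i\rho_{i+1}$ and $\rho_i\rho_{i+1}\sigma_i=\sigma_{i+1}\rho_i\rho_{i+1}$ for $1\le i\le n-2$; $\sigma_i\sigma_j=\sigma_j\sigma_i$, $\rho_i\rho_j=\rho_j\rho_i$ and $\rho_i\sigma_j=\sigma_j\rho_i$ for $|i-j|\ge 2$. $\mathbb F_{2n}$ is the free group on $x_1,\dots,x_n,y_1,\dots,y_n$; automorphisms compose left to right, $(\varphi\psi)(f)=\psi(\varphi(f))$; generators not mentioned are fixed. For $w(A,B)\in\mathbb F_2$, $\Theta_n^w\colon FVB_n\to\mathrm{Aut}(\mathbb F_{2n})$ is the homomorphism given by $\Theta_n^w(\sigma_i): x_i\mapsto x_{i+1}w(y_i,y_{i+1}),\ x_{i+1}\mapsto x_i w(y_i,y_{i+1})^{-1}$ and $\Theta_n^w(\rho_i): x_i\mapsto x_{i+1},\ x_{i+1}\mapsto x_i,\ y_i\mapsto y_{i+1},\ y_{i+1}\mapsto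 y_i$. *)

theory Defs
  imports "HOL-Algebra.Algebra"
begin

text \<open>A letter is a pair (generator, sign); sign True means the generator,
  sign False its inverse.\<close>

type_synonym 'a fword = "('a \<times> bool) list"

fun red_cons :: "'a \<times> bool \<Rightarrow> 'a fword \<Rightarrow> 'a fword" where
  "red_cons a [] = [a]"
| "red_cons a (b # bs) =
     (if fst a = fst b \<and> snd a \<noteq> snd b then bs else a # b # bs)"

definition reduce :: "'a fword \<Rightarrow> 'a fword" where
  "reduce ws = foldr red_cons ws []"

fun reduced :: "'a fword \<Rightarrow> bool" where
  "reduced [] = True"
| "reduced [a] = True"
| "reduced (a # b # bs) =
     (\<not> (fst a = fst b \<and> snd a \<noteq> snd b) \<and> reduced (b # bs))"

definition inv_w :: "'a fword \<Rightarrow> 'a fword" where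
  "inv_w ws = rev (map (\<lambda>(a, e). (a, \<not> e)) ws)"

definition free_grp :: "'a set \<Rightarrow> 'a fword monoid" where
  "free_grp S = \<lparr> carrier = {ws. reduced ws \<and> fst ` set ws \<subseteq> S},
                  monoid.mult = (\<lambda>x y. reduce (x @ y)),
                  monoid.one = [] \<rparr>"

definition ext :: "('a \<Rightarrow> 'b fword) \<Rightarrow> 'a fword \<Rightarrow> 'b fword" where
  "ext f ws = reduce (concat (map (\<lambda>(a, e). if e then f a else inv_w (f a)) ws))"

text \<open>Generators of F_{2n}: (False, i) is x_i and (True, i) is y_i, for 1 \<le> i \<le> n.
  Elements of F_2 = <A,B>: letter False is A, letter True is B.\<close>

definition F2n :: "nat \<Rightarrow> (bool \<times> nat) fword monoid" where
  "F2n n = free_grp (UNIV \<times> {1..n})"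

definition F2 :: "bool fword monoid" where
  "F2 = free_grp (UNIV :: bool set)"

text \<open>w(y_i, y_{i+1}) as an element of F_{2n}.\<close>
definition w_sub :: "bool fword \<Rightarrow> nat \<Rightarrow> (bool \<times> nat) fword" where
  "w_sub w i = ext (\<lambda>b. [((True, if b then i + 1 else i), True)]) w"

definition sig_img :: "bool fword \<Rightarrow> nat \<Rightarrow> bool \<times> nat \<Rightarrow> (bool \<times> nat) fword" where
  "sig_img w i g =
     (if g = (False, i) then reduce ([((False, i + 1), True)] @ w_sub w i)
      else if g = (False, i + 1) then reduce ([((False, i), True)] @ inv_w (w_sub w i))
      else [(g, True)])"

definition rho_img :: "nat \<Rightarrow> bool \<times> nat \<Rightarrow> (bool \<times> nat) fword" where
  "rho_img i g =
     (if snd g = i then [((fst g, i + 1), True)]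
      else if snd g = i + 1 then [((fst g, i), True)]
      else [(g, True)])"

text \<open>Generators of FVB_n: (False, i) is sigma_i and (True, i) is rho_i, 1 \<le> i \<le> n-1.
  All generators are involutions, so positive words suffice.\<close>

definition sg :: "nat \<Rightarrow> bool \<times> nat" where "sg i = (False, i)"
definition rh :: "nat \<Rightarrow> bool \<times> nat" where "rh i = (True, i)"

definition fvb_rels :: "nat \<Rightarrow> ((bool \<times> nat) list \<times> (bool \<times> nat) list) set" where
  "fvb_rels n =
     {([sg i, sg i], []) | i. 1 \<le> i \<and> i \<le> n - 1}
   \<union> {([rh i, rh i], []) | i. 1 \<le> i \<and> i \<le> n - 1}
   \<union> {([sg i, sg (i+1), sg i], [sg (i+1), sg i, sg (i+1)]) | i. 1 \<le> i \<and> i \<le> n - 2}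
   \<union> {([rh i, rh (i+1), rh i], [rh (i+1), rh i, rh (i+1)]) | i. 1 \<le> i \<and> i \<le> n - 2}
   \<union> {([rh i, rh (i+1), sg i], [sg (i+1), rh i, rh (i+1)]) | i. 1 \<le> i \<and> i \<le> n - 2}
   \<union> {([sg i, sg j], [sg j, sg i]) | i j. 1 \<le> i \<and> i \<le> n - 1 \<and> 1 \<le> j \<and> j \<le> n - 1
        \<and> (i + 2 \<le> j \<or> j + 2 \<le> i)}
   \<union> {([rh i, rh j], [rh j, rh i]) | i j. 1 \<le> i \<and> i \<le> n - 1 \<and> 1 \<le> j \<and> j \<le> n - 1
        \<and> (i + 2 \<le> j \<or> j + 2 \<le> i)}
   \<union> {([rh i, sg j], [sg j, rh i]) | i j. 1 \<le> i \<and> i \<le> n - 1 \<and> 1 \<le> j \<and> j \<le> n - 1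
        \<and> (i + 2 \<le> j \<or> j + 2 \<le> i)}"

definition fvb_gens :: "nat \<Rightarrow> (bool \<times> nat) set" where
  "fvb_gens n = UNIV \<times> {1..n - 1}"

inductive fvb_eq :: "nat \<Rightarrow> (bool \<times> nat) list \<Rightarrow> (bool \<times> nat) list \<Rightarrow> bool"
  for n where
  refl: "fvb_eq n u u"
| sym: "fvb_eq n u v \<Longrightarrow> fvb_eq n v u"
| trans: "fvb_eq n u v \<Longrightarrow> fvb_eq n v x \<Longrightarrow> fvb_eq n u x"
| rel: "(l, r) \<in> fvb_rels n \<Longrightarrow> fvb_eq n (u @ l @ v) (u @ r @ v)"

definition fvb_class :: "nat \<Rightarrow> (bool \<times> nat) list \<Rightarrow> (bool \<times> nat) list set" where
  "fvb_class n u = {v. fvb_eq n u v}"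

definition FVB :: "nat \<Rightarrow> (bool \<times> nat) list set monoid" where
  "FVB n = \<lparr> carrier = {fvb_class n u | u. set u \<subseteq> fvb_gens n},
             monoid.mult = (\<lambda>A B. {x. \<exists>u\<in>A. \<exists>v\<in>B. fvb_eq n (u @ v) x}),
             monoid.one = fvb_class n [] \<rparr>"

definition theta_gen :: "bool fword \<Rightarrow> bool \<times> nat \<Rightarrow> (bool \<times> nat) fword \<Rightarrow> (bool \<times> nat) fword" where
  "theta_gen w g = (if fst g then ext (rho_img (snd g)) else ext (sig_img w (snd g)))"

text \<open>Automorphisms compose left to right: (phi psi)(f) = psi(phi(f)).\<close>
fun theta_word :: "bool fword \<Rightarrow> (bool \<times> nat) list \<Rightarrow> (bool \<times> nat) fword \<Rightarrow> (bool \<times> nat) fword" where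
  "theta_word w [] = id"
| "theta_word w (g # gs) = theta_word w gs \<circ> theta_gen w g"

definition Theta :: "nat \<Rightarrow> bool fword \<Rightarrow> (bool \<times> nat) list set \<Rightarrow> (bool \<times> nat) fword \<Rightarrow> (bool \<times> nat) fword" where
  "Theta n w \<beta> = theta_word w (SOME u. u \<in> \<beta>)"

definition ker_Theta :: "nat \<Rightarrow> bool fword \<Rightarrow> (bool \<times> nat) list set set" where
  "ker_Theta n w = {\<beta> \<in> carrier (FVB n). \<forall>f \<in> carrier (F2n n). Theta n w \<beta> f = f}"

end

theory Submission
  imports Defs
begin

text \<open>Replacing \<open>w(y\<^sub>a, y\<^sub>b)\<close> by a new free generator gives an action of \<open>FVB\<^sub>n\<close>
  on a bigger free group from which every \<open>\<Theta>\<^sub>n\<^sup>w\<close> is obtained by substitution.  In it the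
  words \<open>\<alpha> = (\<sigma>\<^sub>1\<rho>\<^sub>2\<sigma>\<^sub>1\<rho>\<^sub>2)\<^sup>3\<close> and \<open>\<beta> = (\<sigma>\<^sub>1\<rho>\<^sub>1\<rho>\<^sub>2\<rho>\<^sub>1\<sigma>\<^sub>1\<rho>\<^sub>1\<rho>\<^sub>2\<rho>\<^sub>1)\<^sup>3\<close> act
  trivially, so they lie in every kernel.  They generate a free group: in a linear representation
  of \<open>FVB\<^sub>n\<close> in which \<open>\<sigma>\<^sub>i\<close> acts by a reflection and \<open>\<rho>\<^sub>i\<close> by permuting coordinates,
  \<open>\<alpha>\<^sup>\<plusminus>\<^sup>1\<close> and \<open>\<beta>\<^sup>\<plusminus>\<^sup>1\<close> preserve a rank-three sublattice, and a ping-pong argument with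
  four cones shows that no nontrivial reduced word in them fixes the vector \<open>(1, 1, 1)\<close>.\<close>

definition inv_letter :: "'a \<times> bool \<Rightarrow> 'a \<times> bool" where
  "inv_letter a = (fst a, \<not> snd a)"

lemma inv_letter_pair [simp]: "inv_letter (a, e) = (a, \<not> e)"
  by (simp add: inv_letter_def)

lemma inv_letter_inv_letter [simp]: "inv_letter (inv_letter a) = a"
  by (cases a) simp

lemma inv_letter_neq [simp]: "inv_letter a \<noteq> a" "a \<noteq> inv_letter a"
  by (cases a; simp)+

lemma cancels_iff_inv_letter: "(fst a = fst b \<and> snd a \<noteq> snd b) \<longleftrightarrow> b = inv_letter a"
  by (cases a; cases b) auto

lemma reduced_Cons_Cons [simp]:
  "reduced (a # b # bs) \<longleftrightarrow> b \<noteq> inv_letter a \<and> reduced (b # bs)"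
  by (simp only: reduced.simps cancels_iff_inv_letter)

lemma red_cons_Cons [simp]:
  "red_cons a (b # bs) = (if b = inv_letter a then bs else a # b # bs)"
  by (simp only: red_cons.simps cancels_iff_inv_letter)

declare reduced.simps(3) [simp del] red_cons.simps(2) [simp del]

lemma reduced_ConsD: "reduced (b # bs) \<Longrightarrow> reduced bs"
  by (cases bs) auto

lemma reduced_snocD:
  "reduced (xs @ [a]) \<Longrightarrow> xs \<noteq> [] \<Longrightarrow> reduced xs \<and> a \<noteq> inv_letter (last xs)"
proof (induction xs rule: reduced.induct)
  case (3 b c cs)
  then show ?case by (cases cs) auto
qed auto

lemma reduced_red_cons: "reduced xs \<Longrightarrow> reduced (red_cons a xs)"
  by (cases xs) (auto dest: reduced_ConsD)

lemma reduced_foldr_red_cons: "reduced ys \<Longrightarrow> reduced (foldr red_cons xs ys)"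
  by (induction xs) (auto intro: reduced_red_cons)

lemma reduced_reduce [simp]: "reduced (reduce xs)"
  unfolding reduce_def by (rule reduced_foldr_red_cons) simp

lemma reduce_Nil [simp]: "reduce [] = []"
  by (simp add: reduce_def)

lemma reduce_Cons: "reduce (a # xs) = red_cons a (reduce xs)"
  by (simp add: reduce_def)

lemma reduce_singleton [simp]: "reduce [a] = [a]"
  by (simp add: reduce_def)

lemma reduce_append: "reduce (xs @ ys) = foldr red_cons xs (reduce ys)"
  by (simp add: reduce_def)

lemma red_cons_red_cons_inv_letter:
  assumes "reduced xs"
  shows "red_cons a (red_cons (inv_letter a) xs) = xs"
proof (cases xs)
  case (Cons b ys)
  show ?thesis
  proof (cases "b = a")
    case True
    have "red_cons a ys = xs"
      using assms Cons True by (cases ys) auto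
    with Cons True show ?thesis by simp
  qed (use Cons in auto)
qed simp

lemma foldr_red_cons_red_cons:
  assumes "reduced ys"
  shows "foldr red_cons (red_cons a xs) ys = red_cons a (foldr red_cons xs ys)"
proof (cases xs)
  case (Cons b xs')
  then show ?thesis
    using red_cons_red_cons_inv_letter[OF reduced_foldr_red_cons[OF assms], of a xs']
    by (cases "b = inv_letter a") auto
qed simp

lemma foldr_red_cons_reduce:
  assumes "reduced ys"
  shows "foldr red_cons (reduce xs) ys = foldr red_cons xs ys"
  by (induction xs) (simp_all add: reduce_Cons foldr_red_cons_red_cons[OF assms])

lemma reduce_idem: "reduced xs \<Longrightarrow> reduce xs = xs"
  by (induction xs rule: reduced.induct) (auto simp: reduce_Cons)

lemma reduce_reduce [simp]: "reduce (reduce xs) = reduce xs"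
  by (simp add: reduce_idem)

lemma reduce_append_reduce_left [simp]: "reduce (reduce xs @ ys) = reduce (xs @ ys)"
  by (simp add: reduce_append foldr_red_cons_reduce)

lemma reduce_append_reduce_right [simp]: "reduce (xs @ reduce ys) = reduce (xs @ ys)"
  by (simp add: reduce_append)

lemma reduce_Cons_reduce [simp]: "reduce (a # reduce ys) = reduce (a # ys)"
  using reduce_append_reduce_right[of "[a]" ys] by simp

lemma reduce_cancel: "reduce (xs @ a # inv_letter a # ys) = reduce (xs @ ys)"
  using red_cons_red_cons_inv_letter[OF reduced_reduce, of a ys]
  by (simp add: reduce_append reduce_Cons)

lemma inv_w_Nil [simp]: "inv_w [] = []"
  by (simp add: inv_w_def)

lemma inv_w_Cons [simp]: "inv_w (a # xs) = inv_w xs @ [inv_letter a]"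
  by (cases a) (simp add: inv_w_def)

lemma inv_w_append [simp]: "inv_w (xs @ ys) = inv_w ys @ inv_w xs"
  by (simp add: inv_w_def)

lemma inv_w_inv_w [simp]: "inv_w (inv_w xs) = xs"
  by (induction xs) auto

lemma reduce_append_inv_w: "reduce (xs @ inv_w xs @ ys) = reduce ys"
proof (induction xs arbitrary: ys)
  case (Cons a xs)
  have "reduce ((a # xs) @ inv_w (a # xs) @ ys) = reduce ([a] @ reduce (xs @ inv_w xs @ inv_letter a # ys))"
    by simp
  also have "\<dots> = reduce ([] @ a # inv_letter a # ys)"
    using Cons by simp
  finally show ?case
    by (simp only: reduce_cancel) simp
qed simp

lemma reduce_inv_w_append: "reduce (inv_w xs @ xs @ ys) = reduce ys"
  using reduce_append_inv_w[of "inv_w xs" ys] by simp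

lemma reduce_inv_w_reduce: "reduce (inv_w (reduce xs) @ ys) = reduce (inv_w xs @ ys)"
proof (induction xs arbitrary: ys)
  case (Cons a xs)
  have IH': "reduce (inv_w (reduce xs) @ inv_letter a # ys) = reduce (inv_w (a # xs) @ ys)"
    using Cons.IH by simp
  show ?case
  proof (cases "reduce xs")
    case (Cons b zs)
    show ?thesis
    proof (cases "b = inv_letter a")
      case True
      then have "reduce (inv_w (reduce xs) @ inv_letter a # ys) = reduce (inv_w zs @ ys)"
        using Cons reduce_cancel[of "inv_w zs" a ys] by simp
      then show ?thesis
        using Cons True IH' by (simp add: reduce_Cons)
    qed (use Cons IH' in \<open>simp add: reduce_Cons\<close>)
  qed (use IH' in \<open>simp add: reduce_Cons\<close>)
qed simp

lemma set_red_cons: "set (red_cons a xs) \<subseteq> insert a (set xs)"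
  by (cases xs) auto

lemma set_reduce: "set (reduce xs) \<subseteq> set xs"
proof (induction xs)
  case (Cons a xs)
  then show ?case
    using set_red_cons[of a "reduce xs"] by (auto simp: reduce_Cons)
qed simp

lemma group_free_grp: "group (free_grp S)"
proof (rule groupI)
  fix x y assume "x \<in> carrier (free_grp S)" "y \<in> carrier (free_grp S)"
  then show "x \<otimes>\<^bsub>free_grp S\<^esub> y \<in> carrier (free_grp S)"
    using set_reduce[of "x @ y"] by (force simp: free_grp_def)
next
  fix x assume x: "x \<in> carrier (free_grp S)"
  have "reduce (inv_w x) \<in> carrier (free_grp S)"
    using x set_reduce[of "inv_w x"] by (force simp: free_grp_def inv_w_def)
  moreover have "reduce (reduce (inv_w x) @ x) = []"
    using reduce_inv_w_append[of x "[]"] by simp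
  ultimately show "\<exists>y\<in>carrier (free_grp S). y \<otimes>\<^bsub>free_grp S\<^esub> x = \<one>\<^bsub>free_grp S\<^esub>"
    by (intro bexI[of _ "reduce (inv_w x)"]) (simp_all add: free_grp_def)
qed (auto simp: free_grp_def reduce_idem)

definition letter_img :: "('a \<Rightarrow> 'b fword) \<Rightarrow> 'a \<times> bool \<Rightarrow> 'b fword" where
  "letter_img f a = (if snd a then f (fst a) else inv_w (f (fst a)))"

definition ext_concat :: "('a \<Rightarrow> 'b fword) \<Rightarrow> 'a fword \<Rightarrow> 'b fword" where
  "ext_concat f xs = concat (map (letter_img f) xs)"

lemma ext_eq_reduce_ext_concat: "ext f xs = reduce (ext_concat f xs)"
  unfolding ext_def ext_concat_def letter_img_def
  by (rule arg_cong[where f = reduce]) (auto intro!: arg_cong[where f = concat] simp: split_beta)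

lemma letter_img_simps [simp]: "letter_img f (c, True) = f c" "letter_img f (c, False) = inv_w (f c)"
  by (simp_all add: letter_img_def)

lemma letter_img_inv_letter [simp]: "letter_img f (inv_letter a) = inv_w (letter_img f a)"
  by (simp add: letter_img_def inv_letter_def)

lemma ext_concat_Nil [simp]: "ext_concat f [] = []"
  by (simp add: ext_concat_def)

lemma ext_concat_Cons [simp]: "ext_concat f (a # xs) = letter_img f a @ ext_concat f xs"
  by (simp add: ext_concat_def)

lemma ext_concat_append [simp]: "ext_concat f (xs @ ys) = ext_concat f xs @ ext_concat f ys"
  by (simp add: ext_concat_def)

lemma ext_concat_inv_w [simp]: "ext_concat f (inv_w xs) = inv_w (ext_concat f xs)"
  by (induction xs) auto

lemma ext_concat_reduce: "reduce (ext_concat f (reduce xs) @ ys) = reduce (ext_concat f xs @ ys)"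
proof (induction xs arbitrary: ys)
  case (Cons a xs)
  have "reduce (letter_img f a @ ext_concat f (reduce xs) @ ys)
      = reduce (letter_img f a @ reduce (ext_concat f (reduce xs) @ ys))"
    by simp
  also have "\<dots> = reduce (ext_concat f (a # xs) @ ys)"
    by (simp only: Cons.IH) simp
  finally have step: "reduce (ext_concat f (a # xs) @ ys)
      = reduce (letter_img f a @ ext_concat f (reduce xs) @ ys)" ..
  show ?case
  proof (cases "reduce xs")
    case (Cons b zs)
    show ?thesis
    proof (cases "b = inv_letter a")
      case True
      then show ?thesis
        using Cons step reduce_append_inv_w[of "letter_img f a" "ext_concat f zs @ ys"]
        by (simp add: reduce_Cons)
    qed (use Cons step in \<open>simp add: reduce_Cons\<close>)
  qed (use step in \<open>simp add: reduce_Cons\<close>)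
qed simp

lemma ext_reduce [simp]: "ext f (reduce xs) = ext f xs"
  using ext_concat_reduce[of f xs "[]"] by (simp add: ext_eq_reduce_ext_concat)

lemma reduced_ext [simp]: "reduced (ext f xs)"
  by (simp add: ext_eq_reduce_ext_concat)

lemma ext_Nil [simp]: "ext f [] = []"
  by (simp add: ext_eq_reduce_ext_concat)

lemma ext_singleton: "ext f [(c, True)] = reduce (f c)"
  by (simp add: ext_eq_reduce_ext_concat)

lemma ext_Cons: "ext f (a # xs) = reduce (letter_img f a @ ext f xs)"
  by (simp add: ext_eq_reduce_ext_concat)

lemma ext_concat_ext_concat:
  "reduce (ext_concat g (ext_concat f xs) @ ys) = reduce (ext_concat (\<lambda>c. ext g (f c)) xs @ ys)"
proof (induction xs arbitrary: ys)
  case (Cons a xs)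
  have "reduce (ext_concat g (ext_concat f (a # xs)) @ ys)
      = reduce (ext_concat g (letter_img f a) @ reduce (ext_concat g (ext_concat f xs) @ ys))"
    by simp
  also have "\<dots> = reduce (reduce (ext_concat g (letter_img f a)) @ ext_concat (\<lambda>c. ext g (f c)) xs @ ys)"
    by (simp only: Cons.IH reduce_append_reduce_right reduce_append_reduce_left)
  also have "\<dots> = reduce (letter_img (\<lambda>c. ext g (f c)) a @ ext_concat (\<lambda>c. ext g (f c)) xs @ ys)"
    by (cases a) (simp add: ext_eq_reduce_ext_concat reduce_inv_w_reduce letter_img_def)
  finally show ?case by simp
qed simp

lemma ext_ext: "ext g (ext f xs) = ext (\<lambda>c. ext g (f c)) xs"
  using ext_concat_ext_concat[of g f xs "[]"]
  by (simp add: ext_eq_reduce_ext_concat[of f] ext_eq_reduce_ext_concat[of _ "ext_concat f xs"])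
    (simp add: ext_eq_reduce_ext_concat)

lemma ext_singletons: "ext (\<lambda>c. [(c, True)]) xs = reduce xs"
proof -
  have "ext_concat (\<lambda>c. [(c, True)]) xs = xs"
    by (induction xs) (auto simp: letter_img_def)
  then show ?thesis by (simp add: ext_eq_reduce_ext_concat)
qed

lemma ext_reduce_img: "ext (\<lambda>c. reduce (f c)) xs = ext f xs"
  using ext_ext[of "\<lambda>c. [(c, True)]" f xs] by (simp add: ext_singletons reduce_idem)

lemma ext_cong: "(\<And>c. c \<in> fst ` set xs \<Longrightarrow> f c = g c) \<Longrightarrow> ext f xs = ext g xs"
  unfolding ext_eq_reduce_ext_concat ext_concat_def letter_img_def
  by (rule arg_cong[where f = reduce]) (auto intro!: arg_cong[where f = concat])


lemma fvb_eq_context: "fvb_eq n u v \<Longrightarrow> fvb_eq n (x @ u @ y) (x @ v @ y)"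
proof (induction rule: fvb_eq.induct)
  case (rel l r u v)
  show ?case
    using fvb_eq.rel[OF rel, of "x @ u" "v @ y"] by simp
qed (auto intro: fvb_eq.intros)

lemma fvb_eq_append: "fvb_eq n u u' \<Longrightarrow> fvb_eq n v v' \<Longrightarrow> fvb_eq n (u @ v) (u' @ v')"
  using fvb_eq_context[of n u u' "[]" v] fvb_eq_context[of n v v' u' "[]"]
  by (auto intro: fvb_eq.trans)

lemma fvb_class_eq_iff: "fvb_class n u = fvb_class n v \<longleftrightarrow> fvb_eq n u v"
  unfolding fvb_class_def by (auto intro: fvb_eq.intros)

lemma fvb_mult_class: "fvb_class n u \<otimes>\<^bsub>FVB n\<^esub> fvb_class n v = fvb_class n (u @ v)"
  unfolding FVB_def fvb_class_def
  by (auto intro: fvb_eq.refl fvb_eq.trans fvb_eq.sym fvb_eq_append)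

lemma fvb_one: "\<one>\<^bsub>FVB n\<^esub> = fvb_class n []"
  by (simp add: FVB_def)

lemma fvb_carrier: "carrier (FVB n) = {fvb_class n u | u. set u \<subseteq> fvb_gens n}"
  by (simp add: FVB_def)

lemma fvb_eq_cancel_square:
  assumes "g \<in> fvb_gens n"
  shows "fvb_eq n (x @ [g, g] @ y) (x @ y)"
proof -
  obtain b i where "g = (b, i)" "1 \<le> i" "i \<le> n - 1"
    using assms by (auto simp: fvb_gens_def)
  then have "([g, g], []) \<in> fvb_rels n"
    by (cases b) (auto simp: fvb_rels_def sg_def rh_def)
  from fvb_eq.rel[OF this, of x y] show ?thesis by simp
qed

lemma fvb_eq_cancel_rev:
  "set u \<subseteq> fvb_gens n \<Longrightarrow> fvb_eq n (x @ rev u @ u @ y) (x @ y)"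
proof (induction u arbitrary: x y)
  case (Cons g u)
  have "fvb_eq n ((x @ rev u) @ [g, g] @ (u @ y)) ((x @ rev u) @ (u @ y))"
    using Cons.prems by (intro fvb_eq_cancel_square) auto
  with Cons show ?case by (auto intro: fvb_eq.trans)
qed (simp add: fvb_eq.refl)

lemma fvb_eq_cancel_rev':
  "set u \<subseteq> fvb_gens n \<Longrightarrow> fvb_eq n (x @ u @ rev u @ y) (x @ y)"
  using fvb_eq_cancel_rev[of "rev u" n x y] by simp

lemma group_FVB: "group (FVB n)"
proof (rule groupI)
  fix x assume "x \<in> carrier (FVB n)"
  then obtain u where u: "x = fvb_class n u" "set u \<subseteq> fvb_gens n"
    by (auto simp: fvb_carrier)
  have "fvb_class n (rev u) \<in> carrier (FVB n)"
    using u by (force simp: fvb_carrier)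
  moreover have "fvb_class n (rev u) \<otimes>\<^bsub>FVB n\<^esub> x = \<one>\<^bsub>FVB n\<^esub>"
    using u fvb_eq_cancel_rev[of u n "[]" "[]"] by (simp add: fvb_mult_class fvb_one fvb_class_eq_iff)
  ultimately show "\<exists>y\<in>carrier (FVB n). y \<otimes>\<^bsub>FVB n\<^esub> x = \<one>\<^bsub>FVB n\<^esub>"
    by blast
next
  fix x y assume "x \<in> carrier (FVB n)" "y \<in> carrier (FVB n)"
  then obtain u v where "x = fvb_class n u" "y = fvb_class n v" "set (u @ v) \<subseteq> fvb_gens n"
    by (auto simp: fvb_carrier)
  then show "x \<otimes>\<^bsub>FVB n\<^esub> y \<in> carrier (FVB n)"
    by (auto simp: fvb_mult_class fvb_carrier intro!: exI[of _ "u @ v"])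
qed (force simp: fvb_carrier fvb_mult_class fvb_one)+

lemma fold_fvb_eq:
  assumes rels: "\<And>l r x. (l, r) \<in> fvb_rels n \<Longrightarrow> x \<in> A \<Longrightarrow> fold act l x = fold act r x"
    and closed: "\<And>g x. x \<in> A \<Longrightarrow> act g x \<in> A"
  shows "fvb_eq n u v \<Longrightarrow> x \<in> A \<Longrightarrow> fold act u x = fold act v x"
proof (induction arbitrary: x rule: fvb_eq.induct)
  case (rel l r u v)
  have "fold act u x \<in> A"
    using rel.prems closed by (induction u arbitrary: x) auto
  then show ?case by (simp add: rels[OF rel.hyps])
qed auto

section \<open>A representation independent of \<open>w\<close>\<close>

text \<open>\<open>GX k\<close> and \<open>GY k\<close> stand for \<open>x\<^sub>k\<close> and \<open>y\<^sub>k\<close>, and \<open>GZ a b\<close> for \<open>w(y\<^sub>a, y\<^sub>b)\<close>.\<close>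

datatype ugen = GX nat | GY nat | GZ nat nat

fun usig :: "nat \<Rightarrow> ugen \<Rightarrow> ugen fword" where
  "usig i (GX k) =
     (if k = i then [(GX (Suc i), True), (GZ i (Suc i), True)]
      else if k = Suc i then [(GX i, True), (GZ i (Suc i), False)]
      else [(GX k, True)])"
| "usig i g = [(g, True)]"

fun urho :: "nat \<Rightarrow> ugen \<Rightarrow> ugen fword" where
  "urho i (GX k) = [(GX (transpose i (Suc i) k), True)]"
| "urho i (GY k) = [(GY (transpose i (Suc i) k), True)]"
| "urho i (GZ a b) = [(GZ (transpose i (Suc i) a) (transpose i (Suc i) b), True)]"

definition ugen_act :: "bool \<times> nat \<Rightarrow> ugen fword \<Rightarrow> ugen fword" where
  "ugen_act g = (if fst g then ext (urho (snd g)) else ext (usig (snd g)))"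

abbreviation uact :: "(bool \<times> nat) list \<Rightarrow> ugen fword \<Rightarrow> ugen fword" where
  "uact u \<equiv> fold ugen_act u"

lemma reduced_ugen_act: "reduced (ugen_act g h)"
  by (simp add: ugen_act_def)

lemma uact_eq_ext: "reduced h \<Longrightarrow> uact u h = ext (\<lambda>c. uact u [(c, True)]) h"
proof (induction u arbitrary: h)
  case Nil
  then show ?case by (simp add: ext_singletons reduce_idem)
next
  case (Cons g u)
  define M where "M = (if fst g then urho (snd g) else usig (snd g))"
  have M: "ugen_act g = ext M"
    by (simp add: ugen_act_def M_def)
  have "uact (g # u) [(c, True)] = ext (\<lambda>c. uact u [(c, True)]) (M c)" for c
    using Cons.IH[of "reduce (M c)"] by (simp add: M ext_singleton)
  then show ?case
    using Cons.IH[of "ext M h"] by (simp add: M ext_ext)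
qed

lemma uact_eqI:
  "(\<And>c. uact l [(c, True)] = uact r [(c, True)]) \<Longrightarrow> reduced h \<Longrightarrow> uact l h = uact r h"
  by (simp add: uact_eq_ext[of h l] uact_eq_ext[of h r])

lemmas uact_simps = ugen_act_def ext_Cons reduce_Cons sg_def rh_def

lemma uact_rel_singleton:
  assumes "(l, r) \<in> fvb_rels n"
  shows "uact l [(c, True)] = uact r [(c, True)]"
  using assms unfolding fvb_rels_def
  by (elim UnE CollectE exE conjE; cases c) (auto simp: uact_simps transpose_def)

lemma uact_fvb_eq: "fvb_eq n u v \<Longrightarrow> reduced h \<Longrightarrow> uact u h = uact v h"
  by (rule fold_fvb_eq[where A = "Collect reduced"])
    (auto intro: uact_eqI uact_rel_singleton simp: reduced_ugen_act)

definition specialize :: "bool fword \<Rightarrow> ugen \<Rightarrow> (bool \<times> nat) fword" where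
  "specialize w c = (case c of
       GX k \<Rightarrow> [((False, k), True)]
     | GY k \<Rightarrow> [((True, k), True)]
     | GZ a b \<Rightarrow> ext (\<lambda>d. [((True, if d then b else a), True)]) w)"

lemma specialize_simps [simp]:
  "specialize w (GX k) = [((False, k), True)]"
  "specialize w (GY k) = [((True, k), True)]"
  "specialize w (GZ a b) = ext (\<lambda>d. [((True, if d then b else a), True)]) w"
  by (simp_all add: specialize_def)

lemma ext_sig_img_specialize: "ext (sig_img w i) (specialize w c) = ext (specialize w) (usig i c)"
proof (cases c)
  case (GX k)
  have "w_sub w i = ext (\<lambda>d. [((True, if d then Suc i else i), True)]) w"
    unfolding w_sub_def by (rule ext_cong) simp
  then show ?thesis
    using GX by (simp add: ext_singleton sig_img_def) (simp add: ext_eq_reduce_ext_concat)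
next
  case (GZ a b)
  then show ?thesis
    by (simp add: ext_ext ext_singleton sig_img_def ext_reduce_img ext_singletons reduce_idem)
qed (simp add: ext_singleton sig_img_def)

lemma ext_rho_img_specialize: "ext (rho_img i) (specialize w c) = ext (specialize w) (urho i c)"
proof (cases c)
  case (GZ a b)
  have "ext (rho_img i) (specialize w c)
      = ext (\<lambda>d. [((True, if d then transpose i (Suc i) b else transpose i (Suc i) a), True)]) w"
    using GZ by (simp add: ext_ext) (rule ext_cong, auto simp: ext_singleton rho_img_def transpose_def)
  then show ?thesis
    using GZ by (simp add: ext_singleton reduce_idem)
qed (auto simp: ext_singleton rho_img_def transpose_def)

lemma theta_word_specialize: "theta_word w u (ext (specialize w) h) = ext (specialize w) (uact u h)"
proof (induction u arbitrary: h)
  case (Cons g u)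
  have "theta_gen w g (ext (specialize w) h) = ext (specialize w) (ugen_act g h)"
    by (simp add: theta_gen_def ugen_act_def ext_ext ext_sig_img_specialize ext_rho_img_specialize)
  with Cons show ?case by simp
qed simp

definition lift_letter :: "(bool \<times> nat) \<times> bool \<Rightarrow> ugen \<times> bool" where
  "lift_letter a = ((if fst (fst a) then GY (snd (fst a)) else GX (snd (fst a))), snd a)"

lemma ext_specialize_lift: "ext (specialize w) (map lift_letter f) = reduce f"
proof -
  have "ext_concat (specialize w) (map lift_letter f) = f"
    by (induction f) (auto simp: lift_letter_def letter_img_def)
  then show ?thesis by (simp add: ext_eq_reduce_ext_concat)
qed

lemma reduced_map_lift_letter: "reduced f \<Longrightarrow> reduced (map lift_letter f)"
proof (induction f rule: reduced.induct)
  case (3 a b bs)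
  then show ?case by (cases a; cases b) (auto simp: lift_letter_def)
qed auto

lemma fvb_class_in_ker_Theta:
  assumes gens: "set u \<subseteq> fvb_gens n" and trivial: "\<And>h. reduced h \<Longrightarrow> uact u h = h"
  shows "fvb_class n u \<in> ker_Theta n w"
proof -
  have "Theta n w (fvb_class n u) f = f" if f: "f \<in> carrier (F2n n)" for f
  proof -
    define v where "v = (SOME v. v \<in> fvb_class n u)"
    have "v \<in> fvb_class n u"
      unfolding v_def by (rule someI[of _ u]) (simp add: fvb_class_def fvb_eq.refl)
    then have uv: "fvb_eq n u v" by (simp add: fvb_class_def)
    have red: "reduced f" "reduced (map lift_letter f)"
      using f reduced_map_lift_letter by (auto simp: F2n_def free_grp_def)
    have "Theta n w (fvb_class n u) f = theta_word w v (ext (specialize w) (map lift_letter f))"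
      by (simp add: Theta_def v_def ext_specialize_lift reduce_idem[OF red(1)])
    also have "\<dots> = ext (specialize w) (uact u (map lift_letter f))"
      by (simp add: theta_word_specialize uact_fvb_eq[OF uv red(2)])
    finally show ?thesis
      by (simp add: trivial[OF red(2)] ext_specialize_lift reduce_idem[OF red(1)])
  qed
  then show ?thesis
    using gens by (auto simp: ker_Theta_def fvb_carrier)
qed

definition alpha_word :: "(bool \<times> nat) list" where
  "alpha_word = concat (replicate 3 [sg 1, rh 2, sg 1, rh 2])"

definition beta_word :: "(bool \<times> nat) list" where
  "beta_word = concat (replicate 3 [sg 1, rh 1, rh 2, rh 1, sg 1, rh 1, rh 2, rh 1])"

text \<open>The letter \<open>(False, e)\<close> of \<open>F\<^sub>2\<close>, i.e. \<open>A\<^sup>\<plusminus>\<^sup>1\<close>, goes to \<open>\<alpha>\<^sup>\<plusminus>\<^sup>1\<close> and \<open>(True, e)\<close> to \<open>\<beta>\<^sup>\<plusminus>\<^sup>1\<close>;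
  the reverse of a word represents its inverse.\<close>

definition block_word :: "bool \<times> bool \<Rightarrow> (bool \<times> nat) list" where
  "block_word a = (let u = if fst a then beta_word else alpha_word in if snd a then u else rev u)"

definition embed_word :: "bool fword \<Rightarrow> (bool \<times> nat) list" where
  "embed_word vs = concat (map block_word vs)"

lemma uact_block_word_singleton: "uact (block_word (b, e)) [(c, True)] = [(c, True)]"
proof -
  note defs = block_word_def alpha_word_def beta_word_def numeral_eq_Suc uact_simps
  show ?thesis
  proof (cases c)
    case (GX k)
    then show ?thesis by (cases "k \<in> {1, 2, 3}"; cases b; cases e) (auto simp: defs)
  next
    case (GY k)
    then show ?thesis by (cases "k \<in> {1, 2, 3}"; cases b; cases e) (auto simp: defs)
  qed (cases b; cases e; simp add: defs)
qed

lemma uact_block_word: "reduced h \<Longrightarrow> uact (block_word a) h = h"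
  using uact_eqI[of "block_word a" "[]" h] uact_block_word_singleton[of "fst a" "snd a"] by simp

lemma uact_embed_word: "reduced h \<Longrightarrow> uact (embed_word vs) h = h"
  by (induction vs) (simp_all add: embed_word_def uact_block_word)

lemma set_block_word: "set (block_word a) \<subseteq> {sg 1, rh 1, rh 2}"
  by (auto simp: block_word_def alpha_word_def beta_word_def numeral_eq_Suc Let_def)

lemma set_embed_word: "3 \<le> n \<Longrightarrow> set (embed_word vs) \<subseteq> fvb_gens n"
  using set_block_word by (fastforce simp: embed_word_def fvb_gens_def sg_def rh_def)

section \<open>A linear representation of \<open>FVB n\<close>\<close>

text \<open>On \<open>\<int>\<close>-valued functions on pairs of points of \<open>{1..n}\<close>, \<open>\<sigma>\<^sub>i\<close> acts as
  the reflection \<open>f \<mapsto> f - B(e\<^sub>p, f) e\<^sub>p\<close> at \<open>p = (i, i+1)\<close> for the symmetric form \<open>B\<close>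
  with Gram matrix \<open>pair_coeff\<close>, and \<open>\<rho>\<^sub>i\<close> permutes the pairs.  The relations hold because
  \<open>B\<close> is invariant under the diagonal action of permutations of the points.\<close>

definition pair_coeff :: "nat \<times> nat \<Rightarrow> nat \<times> nat \<Rightarrow> int" where
  "pair_coeff p q =
     (if p = q then 2
      else if fst p \<notin> {fst q, snd q} \<and> snd p \<notin> {fst q, snd q} then 0
      else if (snd p = fst q \<and> fst p \<noteq> snd q) \<or> (snd q = fst p \<and> snd p \<noteq> fst q) then -1
      else -2)"

definition pair_form :: "nat \<Rightarrow> nat \<times> nat \<Rightarrow> (nat \<times> nat \<Rightarrow> int) \<Rightarrow> int" where
  "pair_form n p f = (\<Sum>r\<in>{1..n} \<times> {1..n}. pair_coeff p r * f r)"

definition reflect :: "nat \<Rightarrow> nat \<times> nat \<Rightarrow> (nat \<times> nat \<Rightarrow> int) \<Rightarrow> nat \<times> nat \<Rightarrow> int" where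
  "reflect n p f = f(p := f p - pair_form n p f)"

definition lgen_act :: "nat \<Rightarrow> bool \<times> nat \<Rightarrow> (nat \<times> nat \<Rightarrow> int) \<Rightarrow> nat \<times> nat \<Rightarrow> int" where
  "lgen_act n g =
     (if fst g then (\<lambda>f. f \<circ> map_prod (transpose (snd g) (snd g + 1)) (transpose (snd g) (snd g + 1)))
      else reflect n (snd g, snd g + 1))"

abbreviation lact :: "nat \<Rightarrow> (bool \<times> nat) list \<Rightarrow> (nat \<times> nat \<Rightarrow> int) \<Rightarrow> nat \<times> nat \<Rightarrow> int" where
  "lact n u \<equiv> fold (lgen_act n) u"

lemma pair_coeff_self [simp]: "pair_coeff p p = 2"
  by (simp add: pair_coeff_def)

lemma pair_coeff_sym: "pair_coeff p q = pair_coeff q p"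
  by (auto simp: pair_coeff_def)

lemma pair_form_upd:
  assumes "q \<in> {1..n} \<times> {1..n}"
  shows "pair_form n p (f(q := x)) = pair_form n p f + pair_coeff p q * (x - f q)"
proof -
  have "pair_form n p g = pair_coeff p q * g q + (\<Sum>r\<in>{1..n} \<times> {1..n} - {q}. pair_coeff p r * g r)"
    for g
    unfolding pair_form_def using assms by (simp add: sum.remove)
  from this[of "f(q := x)"] this[of f] show ?thesis
    by (simp add: algebra_simps)
qed

lemma reflect_reflect: "p \<in> {1..n} \<times> {1..n} \<Longrightarrow> reflect n p (reflect n p f) = f"
  by (simp add: reflect_def pair_form_upd pair_coeff_def)

lemma reflect_braid:
  assumes "p \<in> {1..n} \<times> {1..n}" "q \<in> {1..n} \<times> {1..n}" "p \<noteq> q" "pair_coeff p q = -1"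
  shows "reflect n p (reflect n q (reflect n p f)) = reflect n q (reflect n p (reflect n q f))"
  using assms pair_coeff_sym[of p q]
  by (simp add: reflect_def pair_form_upd fun_eq_iff algebra_simps)

lemma reflect_commute:
  assumes "p \<in> {1..n} \<times> {1..n}" "q \<in> {1..n} \<times> {1..n}" "p \<noteq> q" "pair_coeff p q = 0"
  shows "reflect n p (reflect n q f) = reflect n q (reflect n p f)"
  using assms pair_coeff_sym[of p q]
  by (simp add: reflect_def pair_form_upd fun_eq_iff algebra_simps)

lemma reflect_comp_map_prod:
  assumes "\<pi> permutes {1..n}"
  shows "reflect n p (f \<circ> map_prod \<pi> \<pi>) = reflect n (map_prod \<pi> \<pi> p) f \<circ> map_prod \<pi> \<pi>"
proof -
  have inj: "inj (map_prod \<pi> \<pi>)"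
    using map_prod_inj_on[OF permutes_inj[OF assms] permutes_inj[OF assms]] by simp
  have img: "map_prod \<pi> \<pi> ` ({1..n} \<times> {1..n}) = {1..n} \<times> {1..n}"
    by (intro map_prod_surj_on permutes_image[OF assms])
  have "pair_coeff (map_prod \<pi> \<pi> p) (map_prod \<pi> \<pi> r) = pair_coeff p r" for r
    using permutes_inj[OF assms] by (simp add: pair_coeff_def map_prod_def split_beta inj_eq prod_eq_iff)
  then have "pair_form n p (f \<circ> map_prod \<pi> \<pi>) = pair_form n (map_prod \<pi> \<pi> p) f"
    unfolding pair_form_def by (subst img[symmetric]) (simp add: sum.reindex inj_on_subset[OF inj])
  then show ?thesis
    by (auto simp: reflect_def fun_eq_iff inj_eq[OF inj])
qed

lemma reflect_conj_involution:
  assumes "\<pi> permutes {1..n}" "\<pi> \<circ> \<pi> = id"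
  shows "reflect n p (f \<circ> map_prod \<pi> \<pi>) \<circ> map_prod \<pi> \<pi> = reflect n (\<pi> (fst p), \<pi> (snd p)) f"
proof -
  have "reflect n p (f \<circ> map_prod \<pi> \<pi>) \<circ> map_prod \<pi> \<pi>
      = reflect n (map_prod \<pi> \<pi> p) f \<circ> (map_prod \<pi> \<pi> \<circ> map_prod \<pi> \<pi>)"
    by (simp add: reflect_comp_map_prod[OF assms(1)] comp_assoc)
  also have "map_prod \<pi> \<pi> \<circ> map_prod \<pi> \<pi> = id"
    by (simp add: map_prod_compose[symmetric] assms(2) prod.map_id0)
  also have "map_prod \<pi> \<pi> p = (\<pi> (fst p), \<pi> (snd p))"
    by (cases p) simp
  finally show ?thesis
    by (simp only: comp_id)
qed

lemma lact_sg_sg: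
  assumes "1 \<le> i" "i \<le> n - 1"
  shows "lact n [sg i, sg i] = id"
proof -
  have "(i, Suc i) \<in> {1..n} \<times> {1..n}"
    using assms by auto
  then show ?thesis
    by (simp add: fun_eq_iff lgen_act_def sg_def reflect_reflect)
qed

lemma lact_rh_rh: "lact n [rh i, rh i] = id"
  by (auto simp: fun_eq_iff lgen_act_def rh_def)

lemma lact_sg_braid:
  assumes "1 \<le> i" "i \<le> n - 2"
  shows "lact n [sg i, sg (Suc i), sg i] = lact n [sg (Suc i), sg i, sg (Suc i)]"
proof -
  have "reflect n (i, Suc i) (reflect n (Suc i, Suc (Suc i)) (reflect n (i, Suc i) f))
      = reflect n (Suc i, Suc (Suc i)) (reflect n (i, Suc i) (reflect n (Suc i, Suc (Suc i)) f))" for f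
    using assms by (intro reflect_braid) (auto simp: pair_coeff_def)
  then show ?thesis
    by (intro ext) (simp add: lgen_act_def sg_def)
qed

lemma lact_rh_braid: "lact n [rh i, rh (Suc i), rh i] = lact n [rh (Suc i), rh i, rh (Suc i)]"
  by (auto simp: fun_eq_iff lgen_act_def rh_def transpose_def)

lemma lact_rh_rh_sg:
  assumes "1 \<le> i" "i \<le> n - 2"
  shows "lact n [rh i, rh (Suc i), sg i] = lact n [sg (Suc i), rh i, rh (Suc i)]"
proof -
  let ?A = "map_prod (transpose i (Suc i)) (transpose i (Suc i))"
  let ?B = "map_prod (transpose (Suc i) (Suc (Suc i))) (transpose (Suc i) (Suc (Suc i)))"
  have "transpose i (Suc i) \<circ> transpose (Suc i) (Suc (Suc i)) permutes {1..n}"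
    using assms by (intro permutes_compose permutes_swap_id) auto
  from reflect_comp_map_prod[OF this]
  have "reflect n (i, Suc i) (f \<circ> ?A \<circ> ?B) = reflect n (Suc i, Suc (Suc i)) f \<circ> ?A \<circ> ?B" for f
    by (simp add: map_prod_compose comp_assoc)
  then show ?thesis
    by (intro ext) (simp add: lgen_act_def sg_def rh_def)
qed

lemma lact_sg_commute:
  assumes "1 \<le> i" "i \<le> n - 1" "1 \<le> j" "j \<le> n - 1" "i + 2 \<le> j \<or> j + 2 \<le> i"
  shows "lact n [sg i, sg j] = lact n [sg j, sg i]"
proof -
  have "reflect n (i, Suc i) (reflect n (j, Suc j) f) = reflect n (j, Suc j) (reflect n (i, Suc i) f)" for f
    using assms by (intro reflect_commute) (auto simp: pair_coeff_def)
  then show ?thesis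
    by (intro ext) (simp add: lgen_act_def sg_def)
qed

lemma lact_rh_commute: "i + 2 \<le> j \<or> j + 2 \<le> i \<Longrightarrow> lact n [rh i, rh j] = lact n [rh j, rh i]"
  by (auto simp: fun_eq_iff lgen_act_def rh_def transpose_def)

lemma lact_rh_sg_commute:
  assumes "1 \<le> i" "i \<le> n - 1" "i + 2 \<le> j \<or> j + 2 \<le> i"
  shows "lact n [rh i, sg j] = lact n [sg j, rh i]"
proof -
  have "transpose i (Suc i) permutes {1..n}"
    using assms by (intro permutes_swap_id) auto
  from reflect_comp_map_prod[OF this, of "(j, Suc j)"]
  have "reflect n (j, Suc j) (f \<circ> map_prod (transpose i (Suc i)) (transpose i (Suc i)))
      = reflect n (j, Suc j) f \<circ> map_prod (transpose i (Suc i)) (transpose i (Suc i))" for f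
    using assms by auto
  then show ?thesis
    by (intro ext) (simp add: lgen_act_def sg_def rh_def)
qed

lemma lact_rel: "(l, r) \<in> fvb_rels n \<Longrightarrow> lact n l = lact n r"
  unfolding fvb_rels_def
  by (elim UnE CollectE exE conjE Pair_inject)
    (simp_all del: fold_Cons add: lact_sg_sg lact_rh_rh lact_sg_braid lact_rh_braid lact_rh_rh_sg
      lact_rh_sg_commute, (rule lact_sg_commute lact_rh_commute; simp)+)

lemma lact_fvb_eq: "fvb_eq n u v \<Longrightarrow> lact n u = lact n v"
  by (rule ext) (rule fold_fvb_eq[of n UNIV "lgen_act n"], simp_all add: lact_rel)

section \<open>Ping-pong on three coordinates\<close>

definition vec3 :: "int \<times> int \<times> int \<Rightarrow> nat \<times> nat \<Rightarrow> int" where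
  "vec3 x r =
     (if r = (1, 2) then fst x else if r = (1, 3) then fst (snd x) else if r = (3, 2) then snd (snd x) else 0)"

lemma vec3_eq_iff: "vec3 x = vec3 y \<longleftrightarrow> x = y"
proof
  assume "vec3 x = vec3 y"
  then have "vec3 x (1, 2) = vec3 y (1, 2)" "vec3 x (1, 3) = vec3 y (1, 3)" "vec3 x (3, 2) = vec3 y (3, 2)"
    by simp_all
  then show "x = y"
    by (simp add: vec3_def prod_eq_iff)
qed simp

lemma pair_form_vec3:
  assumes "3 \<le> n"
  shows "pair_form n p (vec3 (u, v, w))
    = pair_coeff p (1, 2) * u + pair_coeff p (1, 3) * v + pair_coeff p (3, 2) * w"
proof -
  have "pair_form n p (vec3 (u, v, w))
      = (\<Sum>r\<in>{(1, 2), (1, 3), (3, 2)}. pair_coeff p r * vec3 (u, v, w) r)"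
    unfolding pair_form_def using assms by (intro sum.mono_neutral_right) (auto simp: vec3_def)
  then show ?thesis by (simp add: vec3_def)
qed

lemma reflect_vec3:
  assumes "3 \<le> n"
  shows "reflect n (1, 2) (vec3 (u, v, w)) = vec3 (- u + 2 * v + 2 * w, v, w)"
    and "reflect n (1, 3) (vec3 (u, v, w)) = vec3 (u, 2 * u - v + w, w)"
    and "reflect n (3, 2) (vec3 (u, v, w)) = vec3 (u, v, 2 * u + v - w)"
  using assms by (auto simp: reflect_def pair_form_vec3 pair_coeff_def fun_eq_iff vec3_def)

lemma lact_rh2_sg1_rh2: "3 \<le> n \<Longrightarrow> lact n [rh 2, sg 1, rh 2] = reflect n (1, 3)"
proof
  fix f assume "3 \<le> n"
  then have "transpose 2 3 permutes {1..n}"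
    by (intro permutes_swap_id) auto
  from reflect_conj_involution[OF this, of "(1, 2)" f]
  show "lact n [rh 2, sg 1, rh 2] f = reflect n (1, 3) f"
    by (simp add: lgen_act_def sg_def rh_def del: One_nat_def)
qed

lemma lact_rh121_sg1_rh121:
  "3 \<le> n \<Longrightarrow> lact n [rh 1, rh 2, rh 1, sg 1, rh 1, rh 2, rh 1] = reflect n (3, 2)"
proof
  fix f assume "3 \<le> n"
  let ?\<pi> = "transpose 1 2 \<circ> transpose 2 3 \<circ> transpose (1 :: nat) 2"
  have "?\<pi> permutes {1..n}"
    using \<open>3 \<le> n\<close> by (intro permutes_compose permutes_swap_id) auto
  moreover have "?\<pi> \<circ> ?\<pi> = id"
    by (simp add: fun_eq_iff)
  ultimately have "reflect n (1, 2) (f \<circ> map_prod ?\<pi> ?\<pi>) \<circ> map_prod ?\<pi> ?\<pi> = reflect n (3, 2) f"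
    by (simp add: reflect_conj_involution)
  then show "lact n [rh 1, rh 2, rh 1, sg 1, rh 1, rh 2, rh 1] f = reflect n (3, 2) f"
    by (simp add: lgen_act_def sg_def rh_def map_prod_compose comp_assoc del: One_nat_def)
qed

lemma lact_blocks:
  assumes "3 \<le> n"
  shows "lact n [sg 1, rh 2, sg 1, rh 2] = reflect n (1, 3) \<circ> reflect n (1, 2)"
    and "lact n [rh 2, sg 1, rh 2, sg 1] = reflect n (1, 2) \<circ> reflect n (1, 3)"
    and "lact n [sg 1, rh 1, rh 2, rh 1, sg 1, rh 1, rh 2, rh 1] = reflect n (3, 2) \<circ> reflect n (1, 2)"
    and "lact n [rh 1, rh 2, rh 1, sg 1, rh 1, rh 2, rh 1, sg 1] = reflect n (1, 2) \<circ> reflect n (3, 2)"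
proof -
  have sg1: "lact n [sg 1] = reflect n (1, 2)"
    by (simp add: fun_eq_iff lgen_act_def sg_def del: One_nat_def)
  note conj = sg1 lact_rh2_sg1_rh2[OF assms] lact_rh121_sg1_rh121[OF assms]
  show "lact n [sg 1, rh 2, sg 1, rh 2] = reflect n (1, 3) \<circ> reflect n (1, 2)"
    using fold_append[of "lgen_act n" "[sg 1]" "[rh 2, sg 1, rh 2]"] by (simp del: fold_Cons One_nat_def add: conj)
  show "lact n [rh 2, sg 1, rh 2, sg 1] = reflect n (1, 2) \<circ> reflect n (1, 3)"
    using fold_append[of "lgen_act n" "[rh 2, sg 1, rh 2]" "[sg 1]"] by (simp del: fold_Cons One_nat_def add: conj)
  show "lact n [sg 1, rh 1, rh 2, rh 1, sg 1, rh 1, rh 2, rh 1] = reflect n (3, 2) \<circ> reflect n (1, 2)"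
    using fold_append[of "lgen_act n" "[sg 1]" "[rh 1, rh 2, rh 1, sg 1, rh 1, rh 2, rh 1]"]
    by (simp del: fold_Cons One_nat_def add: conj)
  show "lact n [rh 1, rh 2, rh 1, sg 1, rh 1, rh 2, rh 1, sg 1] = reflect n (1, 2) \<circ> reflect n (3, 2)"
    using fold_append[of "lgen_act n" "[rh 1, rh 2, rh 1, sg 1, rh 1, rh 2, rh 1]" "[sg 1]"]
    by (simp del: fold_Cons One_nat_def add: conj)
qed

lemma fold_concat_replicate: "fold f (concat (replicate k xs)) = fold f xs ^^ k"
  by (induction k) (simp_all add: funpow_swap1)

fun block_matrix :: "bool \<times> bool \<Rightarrow> int \<times> int \<times> int \<Rightarrow> int \<times> int \<times> int" where
  "block_matrix (False, True) (u, v, w) = (-5 * u + 6 * v + 24 * w, -6 * u + 7 * v + 33 * w, w)"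
| "block_matrix (False, False) (u, v, w) = (7 * u - 6 * v + 30 * w, 6 * u - 5 * v + 21 * w, w)"
| "block_matrix (True, True) (u, v, w) = (-5 * u + 24 * v + 6 * w, v, -6 * u + 33 * v + 7 * w)"
| "block_matrix (True, False) (u, v, w) = (7 * u + 30 * v - 6 * w, v, 6 * u + 21 * v - 5 * w)"

lemma lact_block_word_vec3:
  assumes "3 \<le> n"
  shows "lact n (block_word a) (vec3 x) = vec3 (block_matrix a x)"
proof -
  obtain b e u v w where "a = (b, e)" "x = (u, v, w)"
    by (cases a; cases x)
  moreover have cube: "g ^^ 3 = g \<circ> g \<circ> g" for g :: "'a \<Rightarrow> 'a"
    by (simp add: numeral_3_eq_3 comp_assoc)
  ultimately show ?thesis
    by (cases b; cases e; simp del: fold_Cons One_nat_def add: block_word_def alpha_word_def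
        beta_word_def fold_concat_replicate rev_concat lact_blocks[OF assms] cube;
        simp del: One_nat_def add: reflect_vec3[OF assms] vec3_eq_iff algebra_simps)
qed

text \<open>Ping-pong sets: the block \<open>a\<close> maps \<open>(1, 1, 1)\<close> into \<open>pp_cone a\<close>, and maps each
  \<open>pp_cone b\<close> with \<open>b \<noteq> inv_letter a\<close> into \<open>pp_cone a\<close>; \<open>(1, 1, 1)\<close> lies in no cone.\<close>

fun pp_cone :: "bool \<times> bool \<Rightarrow> int \<times> int \<times> int \<Rightarrow> bool" where
  "pp_cone (False, True) (u, v, w) =
     (v > 0 \<and> w > 0 \<and> 2 * (u - v) \<le> -15 * w \<and> v \<le> 2 * (u - w) \<and> u - w < v)"
| "pp_cone (False, False) (u, v, w) =
     (v > 0 \<and> w > 0 \<and> u - v \<ge> 9 * w \<and> v < u - w \<and> 5 * (u - w) \<le> 7 * v)"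
| "pp_cone (True, True) (u, v, w) =
     (v > 0 \<and> w > 0 \<and> 2 * (u - w) \<le> -15 * v \<and> w \<le> 2 * (u - v) \<and> u - v < w)"
| "pp_cone (True, False) (u, v, w) =
     (v > 0 \<and> w > 0 \<and> u - w \<ge> 9 * v \<and> w < u - v \<and> 5 * (u - v) \<le> 7 * w)"

lemma pp_cone_block_matrix: "b \<noteq> inv_letter a \<Longrightarrow> pp_cone b x \<Longrightarrow> pp_cone a (block_matrix a x)"
  by (cases a; cases b; cases x; cases "fst a"; cases "snd a"; cases "fst b"; cases "snd b") simp_all

lemma pp_cone_block_matrix_one: "pp_cone a (block_matrix a (1, 1, 1))"
  by (cases a; cases "fst a"; cases "snd a") simp_all

lemma not_pp_cone_one: "\<not> pp_cone a (1, 1, 1)"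
  by (cases a; cases "fst a"; cases "snd a") simp_all

lemma lact_embed_word_pp_cone:
  assumes "3 \<le> n" "reduced vs" "vs \<noteq> []"
  shows "\<exists>x. lact n (embed_word vs) (vec3 (1, 1, 1)) = vec3 x \<and> pp_cone (last vs) x"
  using assms(2,3)
proof (induction vs rule: rev_induct)
  case (snoc a vs)
  show ?case
  proof (cases "vs = []")
    case True
    then show ?thesis
      using pp_cone_block_matrix_one[of a] lact_block_word_vec3[OF assms(1)]
      by (intro exI[of _ "block_matrix a (1, 1, 1)"]) (simp add: embed_word_def)
  next
    case False
    with snoc.prems have "reduced vs" "a \<noteq> inv_letter (last vs)"
      using reduced_snocD by blast+
    with snoc.IH False obtain x where "lact n (embed_word vs) (vec3 (1, 1, 1)) = vec3 x"
        "pp_cone (last vs) x"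
      by blast
    moreover have "last vs \<noteq> inv_letter a"
      using \<open>a \<noteq> inv_letter (last vs)\<close> by auto
    ultimately show ?thesis
      using pp_cone_block_matrix lact_block_word_vec3[OF assms(1)]
      by (intro exI[of _ "block_matrix a x"]) (simp add: embed_word_def)
  qed
qed simp

lemma lact_embed_word_eq_id_imp_Nil:
  assumes "3 \<le> n" "reduced vs" "lact n (embed_word vs) = id"
  shows "vs = []"
proof (rule ccontr)
  assume "vs \<noteq> []"
  then obtain x where "lact n (embed_word vs) (vec3 (1, 1, 1)) = vec3 x" "pp_cone (last vs) x"
    using lact_embed_word_pp_cone[OF assms(1,2)] by blast
  with assms(3) not_pp_cone_one show False
    by (simp add: vec3_eq_iff)
qed

definition fvb_embed :: "nat \<Rightarrow> bool fword \<Rightarrow> (bool \<times> nat) list set" where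
  "fvb_embed n vs = fvb_class n (embed_word vs)"

lemma block_word_inv_letter: "block_word (inv_letter a) = rev (block_word a)"
  by (cases a) (simp add: block_word_def)

lemma fvb_eq_embed_word_reduce:
  assumes "3 \<le> n"
  shows "fvb_eq n (embed_word (reduce xs)) (embed_word xs)"
proof (induction xs)
  case (Cons a xs)
  have "fvb_eq n (embed_word (red_cons a (reduce xs))) (block_word a @ embed_word (reduce xs))"
  proof (cases "reduce xs")
    case (Cons b ys)
    have "fvb_eq n (block_word a @ rev (block_word a) @ embed_word ys) (embed_word ys)"
      using fvb_eq_cancel_rev'[of "block_word a" n "[]"] set_embed_word[OF assms, of "[a]"]
      by (simp add: embed_word_def)
    with Cons show ?thesis
      by (auto simp: embed_word_def block_word_inv_letter intro: fvb_eq.refl fvb_eq.sym)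
  qed (simp add: embed_word_def fvb_eq.refl)
  moreover have "fvb_eq n (block_word a @ embed_word (reduce xs)) (block_word a @ embed_word xs)"
    by (rule fvb_eq_append[OF fvb_eq.refl Cons.IH])
  ultimately show ?case
    by (auto simp: reduce_Cons embed_word_def intro: fvb_eq.trans)
qed (simp add: embed_word_def fvb_eq.refl)

lemma fvb_embed_hom: "3 \<le> n \<Longrightarrow> fvb_embed n \<in> hom F2 (FVB n)"
proof (rule homI)
  fix x assume "3 \<le> n"
  then show "fvb_embed n x \<in> carrier (FVB n)"
    using set_embed_word by (auto simp: fvb_embed_def fvb_carrier)
next
  fix x y assume "3 \<le> n"
  then have "fvb_embed n (reduce (x @ y)) = fvb_embed n (x @ y)"
    using fvb_eq_embed_word_reduce by (simp add: fvb_embed_def fvb_class_eq_iff)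
  then show "fvb_embed n (x \<otimes>\<^bsub>F2\<^esub> y) = fvb_embed n x \<otimes>\<^bsub>FVB n\<^esub> fvb_embed n y"
    by (simp add: F2_def free_grp_def fvb_embed_def fvb_mult_class embed_word_def)
qed

lemma fvb_embed_in_ker_Theta: "3 \<le> n \<Longrightarrow> fvb_embed n vs \<in> ker_Theta n w"
  unfolding fvb_embed_def
  by (rule fvb_class_in_ker_Theta[OF set_embed_word uact_embed_word])

lemma group_hom_fvb_embed: "3 \<le> n \<Longrightarrow> group_hom F2 (FVB n) (fvb_embed n)"
  using group_free_grp[of UNIV] group_FVB fvb_embed_hom
  by (simp add: group_hom_def group_hom_axioms_def F2_def)

lemma inj_on_fvb_embed:
  assumes "3 \<le> n"
  shows "inj_on (fvb_embed n) (carrier F2)"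
proof -
  interpret embed: group_hom F2 "FVB n" "fvb_embed n"
    using group_hom_fvb_embed[OF assms] .
  have "vs = []" if "vs \<in> carrier F2" "fvb_embed n vs = \<one>\<^bsub>FVB n\<^esub>" for vs
  proof -
    have "fvb_eq n (embed_word vs) []"
      using that(2) by (simp add: fvb_embed_def fvb_one fvb_class_eq_iff)
    then have "lact n (embed_word vs) = id"
      by (simp add: lact_fvb_eq)
    with assms that(1) show "vs = []"
      using lact_embed_word_eq_id_imp_Nil by (simp add: F2_def free_grp_def)
  qed
  moreover have "fvb_embed n [] = \<one>\<^bsub>FVB n\<^esub>"
    by (simp add: fvb_embed_def fvb_one embed_word_def)
  ultimately show ?thesis
    unfolding embed.inj_iff_trivial_ker kernel_def by (auto simp: F2_def free_grp_def)
qed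

theorem theorem3p2:
  fixes n :: nat and w :: "bool fword"
  assumes "n \<ge> 3" and "w \<in> carrier F2"
  shows "\<exists>H. subgroup H (FVB n) \<and> H \<subseteq> ker_Theta n w
             \<and> (FVB n)\<lparr>carrier := H\<rparr> \<cong> F2"
proof -
  interpret embed: group_hom F2 "FVB n" "fvb_embed n"
    using group_hom_fvb_embed assms(1) by simp
  let ?H = "fvb_embed n ` carrier F2"
  have "fvb_embed n \<in> iso F2 ((FVB n)\<lparr>carrier := ?H\<rparr>)"
    using inj_on_fvb_embed assms(1) embed.hom_closed by (auto simp: iso_def hom_def bij_betw_def)
  then have "(FVB n)\<lparr>carrier := ?H\<rparr> \<cong> F2"
    by (intro embed.G.iso_sym is_isoI)
  moreover have "?H \<subseteq> ker_Theta n w"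
    using fvb_embed_in_ker_Theta assms(1) by blast
  ultimately show ?thesis
    using embed.img_is_subgroup by blast
qed

end
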